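(* Let $R$ be a unital ring with involution and let $a,b\in R$ both be core invertible with $a\overset{\circledast}{\leq} b$. Then: (1) $ba^{\circledast}=ab^{\circledast}$ and $a^{\circledast}b=b^{\circledast}a$; (2) $b^{\circledast}ba^{\circledast}=a^{\circledast}bb^{\circledast}=a^{\circledast}ba^{\circledast}=a^{\circledast}$; (3) $b^{\circledast}aa^{\circledast}=a^{\circledast}ab^{\circledast}=b^{\circledast}ab^{\circledast}=a^{\circledast}$.
   Context: $R$ is a ring with identity and an involution $x\mapsto x^{*}$. An element $a\in R$ is core invertible if there exists $x\in R$ with $axa=a$, $xR=aR$ and $Rx=Ra^{*}$; such $x$ is unique, called the core inverse of $a$ and denoted $a^{\circledast}$. For $a$ core invertible and $b\in R$, $a\overset{\circledast}{\leq} b$ means $a^{\circledast}a=a^{\circledast}b$ and $aa^{\circledast}=ba^{\circledast}$. *)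

theory Defs
  imports Main
begin

class ring_invol = ring_1 +
  fixes invol :: "'a \<Rightarrow> 'a"
  assumes invol_add: "invol (x + y) = invol x + invol y"
      and invol_mult: "invol (x * y) = invol y * invol x"
      and invol_invol: "invol (invol x) = x"

context ring_invol
begin

definition right_ideal :: "'a \<Rightarrow> 'a set" where
  "right_ideal a = {a * r | r. True}"

definition left_ideal :: "'a \<Rightarrow> 'a set" where
  "left_ideal a = {r * a | r. True}"

definition is_core_inverse :: "'a \<Rightarrow> 'a \<Rightarrow> bool" where
  "is_core_inverse a x \<longleftrightarrow> a * x * a = a \<and> right_ideal x = right_ideal a
      \<and> left_ideal x = left_ideal (invol a)"

definition core_invertible :: "'a \<Rightarrow> bool" where
  "core_invertible a \<longleftrightarrow> (\<exists>x. is_core_inverse a x)"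

definition core_inv :: "'a \<Rightarrow> 'a" where
  "core_inv a = (THE x. is_core_inverse a x)"

definition core_le :: "'a \<Rightarrow> 'a \<Rightarrow> bool" where
  "core_le a b \<longleftrightarrow> core_invertible a \<and>
     core_inv a * a = core_inv a * b \<and> a * core_inv a = b * core_inv a"

end

end

theory Submission
  imports Defs
begin

text \<open>
  If \<open>a\<close> is below \<open>b\<close> in the core order and \<open>x = a\<^sup>\<circledast>\<close>, then
  \<open>a = a x a = b x a = b x b\<close>. Hence \<open>a\<^sup>\<circledast>\<close>, which lies in \<open>aR \<subseteq> bR\<close> and in
  \<open>Ra\<^sup>* \<subseteq> Rb\<^sup>*\<close>, is fixed by the idempotents \<open>b\<^sup>\<circledast>b\<close> on the left and \<open>bb\<^sup>\<circledast>\<close> on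
  the right. Substituting \<open>a = bxb\<close> into \<open>ab\<^sup>\<circledast>\<close> and \<open>b\<^sup>\<circledast>a\<close> yields (1), and
  (2) and (3) follow from (1) and the defining identities of the core order.
\<close>

context ring_invol
begin

lemma right_ideal_iff: "c \<in> right_ideal a \<longleftrightarrow> (\<exists>r. c = a * r)"
  unfolding right_ideal_def by blast

lemma left_ideal_iff: "c \<in> left_ideal a \<longleftrightarrow> (\<exists>r. c = r * a)"
  unfolding left_ideal_def by blast

lemma self_mem_right_ideal: "a \<in> right_ideal a"
  unfolding right_ideal_iff by (metis mult_1_right)

lemma self_mem_left_ideal: "a \<in> left_ideal a"
  unfolding left_ideal_iff by (metis mult_1_left)

lemma invol_mult3: "invol (a * b * c) = invol c * invol b * invol a"
  by (simp add: invol_mult mult.assoc)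

lemma core_inverse_inner:
  assumes "is_core_inverse a x" shows "a * x * a = a"
  using assms unfolding is_core_inverse_def by blast

lemma core_inverse_right_factor:
  assumes "is_core_inverse a x" obtains u where "x = a * u"
proof -
  have "x \<in> right_ideal a"
    using assms self_mem_right_ideal[of x] unfolding is_core_inverse_def by simp
  then show thesis using that unfolding right_ideal_iff by blast
qed

lemma core_inverse_left_factor:
  assumes "is_core_inverse a x" obtains w where "x = w * invol a"
proof -
  have "x \<in> left_ideal (invol a)"
    using assms self_mem_left_ideal[of x] unfolding is_core_inverse_def by simp
  then show thesis using that unfolding left_ideal_iff by blast
qed

lemma core_inverse_recover:
  assumes "is_core_inverse a x" obtains v where "a = x * v"
proof -
  have "a \<in> right_ideal x"
    using assms self_mem_right_ideal[of a] unfolding is_core_inverse_def by simp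
  then show thesis using that unfolding right_ideal_iff by blast
qed

lemma core_inverse_left_absorb:
  assumes "is_core_inverse a x" shows "a * x * (a * s) = a * s"
  using core_inverse_inner[OF assms] by (metis mult.assoc)

lemma core_inverse_idem: "is_core_inverse a x \<Longrightarrow> a * x * x = x"
  by (metis core_inverse_right_factor core_inverse_left_absorb)

lemma core_inverse_hermitian:
  assumes "is_core_inverse a x" shows "invol (a * x) = a * x"
proof -
  obtain w where w: "x = w * invol a" using core_inverse_left_factor[OF assms] .
  have "invol a = invol a * invol x * invol a"
    using arg_cong[OF core_inverse_inner[OF assms], of invol] by (simp add: invol_mult3)
  then have "x = x * invol x * invol a"
    by (metis w mult.assoc)
  then have "a * x = a * x * invol x * invol a"
    by (metis mult.assoc)
  moreover have "invol (a * x * invol x * invol a) = a * x * invol x * invol a"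
    by (simp add: invol_mult invol_invol mult.assoc)
  ultimately show ?thesis by simp
qed

lemma core_inverse_outer:
  assumes "is_core_inverse a x" shows "x * a * x = x"
proof -
  obtain w where w: "x = w * invol a" using core_inverse_left_factor[OF assms] .
  have "x * a * x = x * invol (a * x)"
    using core_inverse_hermitian[OF assms] by (simp add: mult.assoc)
  also have "\<dots> = w * invol (a * x * a)"
    by (simp add: w invol_mult mult.assoc)
  also have "\<dots> = w * invol a"
    by (simp only: core_inverse_inner[OF assms])
  finally show ?thesis
    by (simp only: w[symmetric])
qed

lemma core_inverse_right_absorb:
  assumes "is_core_inverse a x" shows "r * invol a * a * x = r * invol a"
proof -
  have "invol a * a * x = invol a * invol (a * x)"
    using core_inverse_hermitian[OF assms] by (simp add: mult.assoc)
  also have "\<dots> = invol (a * x * a)"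
    by (simp add: invol_mult)
  finally have "invol a * a * x = invol a"
    by (simp only: core_inverse_inner[OF assms])
  then show ?thesis
    by (metis mult.assoc)
qed

lemma core_inverse_left_unit:
  assumes "is_core_inverse a x" shows "x * a * (a * s) = a * s"
proof -
  obtain v where v: "a = x * v" using core_inverse_recover[OF assms] .
  have "x * a * a = a"
    using core_inverse_outer[OF assms] by (metis v mult.assoc)
  then show ?thesis by (metis mult.assoc)
qed

lemma core_inverse_unique:
  assumes x: "is_core_inverse a x" and y: "is_core_inverse a y"
  shows "x = y"
proof -
  have "a * y = invol (a * x * (a * y))"
    using core_inverse_left_absorb[OF x] core_inverse_hermitian[OF y] by simp
  also have "\<dots> = a * y * (a * x)"
    using core_inverse_hermitian[OF x] core_inverse_hermitian[OF y] by (simp add: invol_mult)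
  also have "\<dots> = a * x"
    using core_inverse_left_absorb[OF y] .
  finally have axy: "a * x = a * y" ..
  have a_diff: "a * (x * x - y * y) = x - y"
    using core_inverse_idem[OF x] core_inverse_idem[OF y]
    by (simp add: right_diff_distrib mult.assoc)
  \<comment> \<open>\<open>x - y\<close> lies in \<open>aR\<close>, on which \<open>x a\<close> acts as the identity\<close>
  have "x - y = x * a * (x - y)"
    using core_inverse_left_unit[OF x] a_diff by metis
  also have "\<dots> = x * (a * x - a * y)"
    by (simp add: mult.assoc right_diff_distrib)
  finally show ?thesis using axy by simp
qed

lemma core_inv_is_core_inverse:
  assumes "core_invertible a" shows "is_core_inverse a (core_inv a)"
proof -
  obtain x where x: "is_core_inverse a x"
    using assms unfolding core_invertible_def by blast
  then have "core_inv a = x"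
    unfolding core_inv_def using core_inverse_unique by blast
  with x show ?thesis by simp
qed

lemma core_le_sandwich:
  assumes "core_le a b" shows "a = b * core_inv a * b"
proof -
  have le: "core_inv a * a = core_inv a * b" "a * core_inv a = b * core_inv a"
    using assms unfolding core_le_def by auto
  have "a = a * core_inv a * a"
    using assms core_inv_is_core_inverse core_inverse_inner unfolding core_le_def by metis
  also have "\<dots> = b * (core_inv a * a)" by (simp add: le(2) mult.assoc)
  finally show ?thesis by (simp add: le(1) mult.assoc)
qed

lemma core_le_core_inv_left_fixed:
  assumes "core_le a b" and "core_invertible b"
  shows "core_inv b * b * core_inv a = core_inv a"
proof -
  have "core_invertible a" using assms(1) unfolding core_le_def by blast
  then obtain u where u: "core_inv a = a * u"
    using core_inv_is_core_inverse core_inverse_right_factor by blast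
  have "core_inv a = b * (core_inv a * b * u)"
    using core_le_sandwich[OF assms(1)] by (metis u mult.assoc)
  then show ?thesis
    by (metis core_inverse_left_unit core_inv_is_core_inverse[OF assms(2)])
qed

lemma core_le_core_inv_right_fixed:
  assumes "core_le a b" and "core_invertible b"
  shows "core_inv a * b * core_inv b = core_inv a"
proof -
  have "core_invertible a" using assms(1) unfolding core_le_def by blast
  then obtain w where w: "core_inv a = w * invol a"
    using core_inv_is_core_inverse core_inverse_left_factor by blast
  have "invol a = invol b * invol (core_inv a) * invol b"
    using arg_cong[OF core_le_sandwich[OF assms(1)], of invol] by (simp add: invol_mult3)
  then have "core_inv a = (w * invol b * invol (core_inv a)) * invol b"
    by (simp add: w mult.assoc)
  then show ?thesis
    by (metis core_inverse_right_absorb core_inv_is_core_inverse[OF assms(2)])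
qed

end

theorem theorem2p6:
  fixes a b :: "'a :: ring_invol"
  assumes "core_invertible a" and "core_invertible b" and "core_le a b"
  shows "(b * core_inv a = a * core_inv b \<and> core_inv a * b = core_inv b * a)
     \<and> (core_inv b * b * core_inv a = core_inv a \<and> core_inv a * b * core_inv b = core_inv a
         \<and> core_inv a * b * core_inv a = core_inv a)
     \<and> (core_inv b * a * core_inv a = core_inv a \<and> core_inv a * a * core_inv b = core_inv a
         \<and> core_inv b * a * core_inv b = core_inv a)"
proof -
  define x y where "x = core_inv a" and "y = core_inv b"
  have le: "x * a = x * b" "a * x = b * x"
    using assms(3) unfolding core_le_def x_def by auto
  have sandwich: "a = b * x * b"
    using core_le_sandwich[OF assms(3)] by (simp add: x_def)
  have ybx: "y * b * x = x" and xby: "x * b * y = x"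
    using core_le_core_inv_left_fixed core_le_core_inv_right_fixed assms(2,3)
    by (simp_all add: x_def y_def)
  have xax: "x * a * x = x"
    using core_inverse_outer core_inv_is_core_inverse[OF assms(1)] by (simp add: x_def)
  have c1: "b * x = a * y"
    using xby by (simp add: sandwich mult.assoc)
  have c2: "x * b = y * a"
    using ybx by (metis sandwich mult.assoc)
  show ?thesis
    using c1 c2 ybx xby xax le by (simp add: x_def[symmetric] y_def[symmetric] mult.assoc)
qed

end
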